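(* Let $\sigma_j$, $\lambda_j$, $\Lambda_j$ be, respectively, the eigenvalues on $(0,1)$ of the buckling problem $u''''=-\sigma u''$ with $u(0)=u'(0)=u(1)=u'(1)=0$, of the Dirichlet Laplacian $-u''=\lambda u$ with $u(0)=u(1)=0$, and of the Dirichlet Bilaplacian $u''''=\Lambda u$ with $u(0)=u'(0)=u(1)=u'(1)=0$, each listed in increasing order. Then for all $j\in\mathbb N$, $$\Lambda_j>\lambda_j\sigma_j.$$
   Context: All three problems have simple eigenvalues forming increasing sequences $\to+\infty$; the problems are understood in the weak sense in $H^1_0(0,1)$ (Laplacian) and $H^2_0(0,1)$ (the two fourth-order problems). *)

theory Defs
  imports Complex_Main
begin

text \<open>ds 0 = u and ds (Suc k) is the derivative of ds k, for k < n, everywhere on the real line.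
  (Eigenfunctions of these constant-coefficient problems on (0,1) are restrictions of entire
  functions, so classical C^n solutions coincide with the weak ones.)\<close>
definition has_derivs :: "nat \<Rightarrow> (nat \<Rightarrow> real \<Rightarrow> real) \<Rightarrow> bool" where
  "has_derivs n ds \<longleftrightarrow>
     (\<forall>k<n. \<forall>x. (ds k has_real_derivative ds (Suc k) x) (at x))"

definition dirichlet_laplacian_eig :: "real \<Rightarrow> bool" where
  "dirichlet_laplacian_eig lam \<longleftrightarrow>
     (\<exists>ds. has_derivs 2 ds \<and>
        (\<forall>x\<in>{0<..<1}. - ds 2 x = lam * ds 0 x) \<and>
        ds 0 0 = 0 \<and> ds 0 1 = 0 \<and>
        (\<exists>x\<in>{0<..<1}. ds 0 x \<noteq> 0))"

definition buckling_eig :: "real \<Rightarrow> bool" where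
  "buckling_eig \<sigma> \<longleftrightarrow>
     (\<exists>ds. has_derivs 4 ds \<and>
        (\<forall>x\<in>{0<..<1}. ds 4 x = - \<sigma> * ds 2 x) \<and>
        ds 0 0 = 0 \<and> ds 1 0 = 0 \<and> ds 0 1 = 0 \<and> ds 1 1 = 0 \<and>
        (\<exists>x\<in>{0<..<1}. ds 0 x \<noteq> 0))"

definition dirichlet_bilaplacian_eig :: "real \<Rightarrow> bool" where
  "dirichlet_bilaplacian_eig \<Lambda> \<longleftrightarrow>
     (\<exists>ds. has_derivs 4 ds \<and>
        (\<forall>x\<in>{0<..<1}. ds 4 x = \<Lambda> * ds 0 x) \<and>
        ds 0 0 = 0 \<and> ds 1 0 = 0 \<and> ds 0 1 = 0 \<and> ds 1 1 = 0 \<and>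
        (\<exists>x\<in>{0<..<1}. ds 0 x \<noteq> 0))"

definition jth_eig :: "(real \<Rightarrow> bool) \<Rightarrow> nat \<Rightarrow> real" where
  "jth_eig P j = (THE \<mu>. P \<mu> \<and> finite {\<nu>. P \<nu> \<and> \<nu> < \<mu>} \<and> card {\<nu>. P \<nu> \<and> \<nu> < \<mu>} = j - 1)"

end

(*
  All three spectra are computed explicitly. A nonpositive eigenvalue is excluded by an
  energy identity (integration by parts in disguise); for a positive one, uniqueness for
  linear ODEs with zero initial data (a Gronwall estimate on the sum of the squares of the
  derivatives) puts the eigenfunction into a two-dimensional family of explicit solutions,
  and the boundary conditions at 1 become a characteristic equation:
    lambda = k^2 with sin k = 0, so lambda_j = (j pi)^2;
    sigma = (2 t)^2 with sin t (sin t - t cos t) = 0; the roots m pi and the roots of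
      tan t = t alternate, so sigma_j <= ((j + 1) pi)^2;
    Lambda = mu^4 with cos mu cosh mu = 1; the j-th positive root mu_j is the only one in
      [j pi + pi/3, j pi + 2 pi/3], where (-1)^j cos mu cosh mu is strictly decreasing.
  Evaluating cos mu cosh mu at mu = pi sqrt (j (j + 1)) shows that this point lies below
  mu_j, hence Lambda_j = mu_j^4 > pi^4 j^2 (j + 1)^2 >= lambda_j sigma_j.
*)

theory Submission
  imports Defs "HOL-Analysis.Complex_Transcendental"
begin

section \<open>Sequences of derivatives\<close>

lemma has_derivsD:
  "has_derivs n ds \<Longrightarrow> k < n \<Longrightarrow> (ds k has_real_derivative ds (Suc k) x) (at x)"
  unfolding has_derivs_def by blast

lemma has_derivs_2D:
  assumes "has_derivs 2 u"
  shows "(u 0 has_real_derivative u 1 x) (at x)" "(u 1 has_real_derivative u 2 x) (at x)"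
  using has_derivsD[OF assms, of 0 x] has_derivsD[OF assms, of 1 x]
  by (simp_all add: eval_nat_numeral)

lemma has_derivs_4D:
  assumes "has_derivs 4 u"
  shows "(u 0 has_real_derivative u 1 x) (at x)" "(u 1 has_real_derivative u 2 x) (at x)"
    "(u 2 has_real_derivative u 3 x) (at x)" "(u 3 has_real_derivative u 4 x) (at x)"
  using has_derivsD[OF assms, of 0 x] has_derivsD[OF assms, of 1 x]
    has_derivsD[OF assms, of 2 x] has_derivsD[OF assms, of 3 x]
  by (simp_all add: eval_nat_numeral)

lemma has_derivs_mono: "has_derivs n ds \<Longrightarrow> m \<le> n \<Longrightarrow> has_derivs m ds"
  unfolding has_derivs_def by auto

lemma has_derivs_continuous_on:
  "has_derivs n ds \<Longrightarrow> k < n \<Longrightarrow> continuous_on S (ds k)"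
  by (meson DERIV_isCont continuous_at_imp_continuous_on has_derivsD)

lemma has_derivs_add:
  "has_derivs n f \<Longrightarrow> has_derivs n g \<Longrightarrow> has_derivs n (\<lambda>k x. f k x + g k x)"
  unfolding has_derivs_def by (auto intro: derivative_intros)

lemma has_derivs_diff:
  "has_derivs n f \<Longrightarrow> has_derivs n g \<Longrightarrow> has_derivs n (\<lambda>k x. f k x - g k x)"
  unfolding has_derivs_def by (auto intro: derivative_intros)

lemma has_derivs_cmult: "has_derivs n f \<Longrightarrow> has_derivs n (\<lambda>k x. c * f k x)"
  unfolding has_derivs_def by (auto intro: DERIV_cmult)

fun cos_derivs :: "real \<Rightarrow> nat \<Rightarrow> real \<Rightarrow> real"
  and sin_derivs :: "real \<Rightarrow> nat \<Rightarrow> real \<Rightarrow> real" where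
  "cos_derivs k 0 x = cos (k * x)"
| "cos_derivs k (Suc i) x = - k * sin_derivs k i x"
| "sin_derivs k 0 x = sin (k * x)"
| "sin_derivs k (Suc i) x = k * cos_derivs k i x"

fun cosh_derivs :: "real \<Rightarrow> nat \<Rightarrow> real \<Rightarrow> real"
  and sinh_derivs :: "real \<Rightarrow> nat \<Rightarrow> real \<Rightarrow> real" where
  "cosh_derivs k 0 x = cosh (k * x)"
| "cosh_derivs k (Suc i) x = k * sinh_derivs k i x"
| "sinh_derivs k 0 x = sinh (k * x)"
| "sinh_derivs k (Suc i) x = k * cosh_derivs k i x"

definition affine_derivs :: "real \<Rightarrow> real \<Rightarrow> nat \<Rightarrow> real \<Rightarrow> real" where
  "affine_derivs a b i x = (if i = 0 then a + b * x else if i = 1 then b else 0)"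

lemma DERIV_cos_sin_derivs:
  "(cos_derivs k i has_real_derivative cos_derivs k (Suc i) x) (at x) \<and>
   (sin_derivs k i has_real_derivative sin_derivs k (Suc i) x) (at x)"
proof (induction i arbitrary: x)
  case 0
  show ?case by (auto intro!: derivative_eq_intros)
next
  case (Suc i)
  have c: "(cos_derivs k i has_real_derivative cos_derivs k (Suc i) x) (at x)"
    and s: "(sin_derivs k i has_real_derivative sin_derivs k (Suc i) x) (at x)"
    using Suc.IH by blast+
  have eqs: "cos_derivs k (Suc i) = (\<lambda>x. - k * sin_derivs k i x)"
    "sin_derivs k (Suc i) = (\<lambda>x. k * cos_derivs k i x)" by auto
  show ?case using DERIV_cmult[OF s, of "- k"] DERIV_cmult[OF c, of k]
    by (simp only: eqs cos_derivs.simps sin_derivs.simps)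
qed

lemma DERIV_cosh_sinh_derivs:
  "(cosh_derivs k i has_real_derivative cosh_derivs k (Suc i) x) (at x) \<and>
   (sinh_derivs k i has_real_derivative sinh_derivs k (Suc i) x) (at x)"
proof (induction i arbitrary: x)
  case 0
  show ?case by (auto intro!: derivative_eq_intros)
next
  case (Suc i)
  have c: "(cosh_derivs k i has_real_derivative cosh_derivs k (Suc i) x) (at x)"
    and s: "(sinh_derivs k i has_real_derivative sinh_derivs k (Suc i) x) (at x)"
    using Suc.IH by blast+
  have eqs: "cosh_derivs k (Suc i) = (\<lambda>x. k * sinh_derivs k i x)"
    "sinh_derivs k (Suc i) = (\<lambda>x. k * cosh_derivs k i x)" by auto
  show ?case using DERIV_cmult[OF s, of k] DERIV_cmult[OF c, of k]
    by (simp only: eqs cosh_derivs.simps sinh_derivs.simps)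
qed

lemma has_derivs_cos_derivs: "has_derivs n (cos_derivs k)"
  and has_derivs_sin_derivs: "has_derivs n (sin_derivs k)"
  and has_derivs_cosh_derivs: "has_derivs n (cosh_derivs k)"
  and has_derivs_sinh_derivs: "has_derivs n (sinh_derivs k)"
  unfolding has_derivs_def using DERIV_cos_sin_derivs DERIV_cosh_sinh_derivs by blast+

lemma has_derivs_affine_derivs: "has_derivs n (affine_derivs a b)"
  unfolding has_derivs_def
proof (intro allI impI)
  fix k x
  have "affine_derivs a b 0 = (\<lambda>x. a + b * x)"
    "affine_derivs a b (Suc j) = (\<lambda>x. if j = 0 then b else 0)" for j
    by (auto simp: affine_derivs_def)
  then show "(affine_derivs a b k has_real_derivative affine_derivs a b (Suc k) x) (at x)"
    by (cases k) (auto intro!: derivative_eq_intros)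
qed

section \<open>Linear ODEs on the unit interval\<close>

lemma DERIV_nonpos_interior_imp_nonincreasing:
  fixes F F' :: "real \<Rightarrow> real"
  assumes "\<And>x. (F has_real_derivative F' x) (at x)" "\<And>x. x \<in> {a<..<b} \<Longrightarrow> F' x \<le> 0"
    and "a \<le> x" "x \<le> y" "y \<le> b"
  shows "F y \<le> F x"
proof (cases "x = y")
  case False
  with assms obtain z where z: "x < z" "z < y" "F y - F x = (y - x) * F' z"
    using MVT2[of x y F F'] by force
  have "(y - x) * F' z \<le> 0"
    using assms z by (intro mult_nonneg_nonpos) auto
  with z show ?thesis by linarith
qed simp

lemma DERIV_nonpos_eq_ends_imp_zero:
  fixes F F' :: "real \<Rightarrow> real"
  assumes deriv: "\<And>x. (F has_real_derivative F' x) (at x)"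
    and nonpos: "\<And>x. x \<in> {a<..<b} \<Longrightarrow> F' x \<le> 0"
    and ends: "F a = F b" and x: "x \<in> {a<..<b}"
  shows "F' x = 0"
proof (rule DERIV_local_const[OF deriv])
  have const: "F y = F a" if "a \<le> y" "y \<le> b" for y
    using DERIV_nonpos_interior_imp_nonincreasing[OF deriv nonpos, of a y]
      DERIV_nonpos_interior_imp_nonincreasing[OF deriv nonpos, of y b] that ends by fastforce
  show "0 < min (x - a) (b - x)" using x by auto
  show "\<forall>y. \<bar>x - y\<bar> < min (x - a) (b - x) \<longrightarrow> F x = F y"
  proof (intro allI impI)
    fix y assume "\<bar>x - y\<bar> < min (x - a) (b - x)"
    then have "a \<le> y" "y \<le> b" by auto
    with x show "F x = F y" using const[of x] const[of y] by auto
  qed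
qed

lemma gronwall_zero:
  fixes E E' :: "real \<Rightarrow> real"
  assumes deriv: "\<And>x. (E has_real_derivative E' x) (at x)"
    and growth: "\<And>x. x \<in> {a<..<b} \<Longrightarrow> E' x \<le> K * E x"
    and nonneg: "\<And>x. x \<in> {a..b} \<Longrightarrow> 0 \<le> E x" and "E a = 0" and x: "x \<in> {a..b}"
  shows "E x = 0"
proof -
  define H where "H x = E x * exp (- K * x)" for x
  have H_deriv: "(H has_real_derivative (E' y - K * E y) * exp (- K * y)) (at y)" for y
    unfolding H_def by (auto intro!: derivative_eq_intros deriv simp: algebra_simps)
  have H_nonpos: "(E' y - K * E y) * exp (- K * y) \<le> 0" if "y \<in> {a<..<b}" for y
    using growth[OF that] by (simp add: mult_nonpos_nonneg)
  have "H x \<le> H a"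
    using x by (intro DERIV_nonpos_interior_imp_nonincreasing[OF H_deriv H_nonpos]) auto
  then have "E x \<le> 0" using \<open>E a = 0\<close> by (simp add: H_def mult_le_0_iff)
  with nonneg[OF x] show ?thesis by simp
qed

lemma linear_ode_zero_initial_data:
  fixes u :: "nat \<Rightarrow> real \<Rightarrow> real" and a :: "nat \<Rightarrow> real"
  assumes u: "has_derivs n u"
    and ode: "\<And>x. x \<in> {0<..<1} \<Longrightarrow> u n x = (\<Sum>i<n. a i * u i x)"
    and init: "\<And>i. i < n \<Longrightarrow> u i 0 = 0"
    and k: "k < n" and x: "x \<in> {0..1}"
  shows "u k x = 0"
proof -
  define E where "E x = (\<Sum>i<n. (u i x)\<^sup>2)" for x
  define E' where "E' x = (\<Sum>i<n. 2 * u i x * u (Suc i) x)" for x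
  define A where "A = (\<Sum>i<n. (a i)\<^sup>2)"
  have deriv: "(E has_real_derivative E' x) (at x)" for x
    unfolding E_def E'_def
  proof (rule DERIV_sum)
    fix i assume "i \<in> {..<n}"
    then show "((\<lambda>x. (u i x)\<^sup>2) has_real_derivative 2 * u i x * u (Suc i) x) (at x)"
      using has_derivsD[OF u, of i x] by (auto intro!: derivative_eq_intros)
  qed
  have growth: "E' x \<le> (2 + A) * E x" if "x \<in> {0<..<1}" for x
  proof -
    have "E' x \<le> (\<Sum>i<n. (u i x)\<^sup>2 + (u (Suc i) x)\<^sup>2)"
      unfolding E'_def by (intro sum_mono) (simp add: sum_squares_bound)
    also have "\<dots> = E x + (\<Sum>i<n. (u (Suc i) x)\<^sup>2)"
      by (simp add: E_def sum.distrib)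
    also have "(\<Sum>i<n. (u (Suc i) x)\<^sup>2) \<le> E x + (u n x)\<^sup>2"
    proof -
      have "(u 0 x)\<^sup>2 + (\<Sum>i<n. (u (Suc i) x)\<^sup>2) = E x + (u n x)\<^sup>2"
        using sum.lessThan_Suc_shift[of "\<lambda>i. (u i x)\<^sup>2" n] by (simp add: E_def)
      then show ?thesis using zero_le_power2[of "u 0 x"] by linarith
    qed
    also have "(u n x)\<^sup>2 \<le> A * E x"
      unfolding ode[OF that] E_def A_def by (rule Cauchy_Schwarz_ineq_sum)
    finally show ?thesis by (simp add: distrib_right)
  qed
  have "E x = 0"
    by (rule gronwall_zero[OF deriv growth _ _ x]) (auto simp: E_def init intro: sum_nonneg)
  moreover have "(u k x)\<^sup>2 \<le> E x"
    unfolding E_def using k by (intro member_le_sum) auto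
  ultimately show ?thesis by simp
qed

lemma has_derivs_nontrivial_if_deriv_at_0:
  assumes ds: "has_derivs n ds" and k: "k < n" and nonzero: "ds k 0 \<noteq> 0"
  shows "\<exists>x\<in>{0<..<1}. ds 0 x \<noteq> 0"
proof (rule ccontr)
  assume "\<not> ?thesis"
  then have vanish: "ds 0 x = 0" if "x \<in> {0<..<1}" for x
    using that by blast
  have "ds i x = 0" if "i \<le> k" "x \<in> {0<..<1}" for i x
    using that
  proof (induction i arbitrary: x)
    case (Suc i)
    show ?case
    proof (rule DERIV_local_const[OF has_derivsD[OF ds]])
      show "i < n" using Suc k by simp
      show "0 < min x (1 - x)" using Suc by auto
      show "\<forall>y. \<bar>x - y\<bar> < min x (1 - x) \<longrightarrow> ds i x = ds i y"
        using Suc by (auto simp: abs_if split: if_splits)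
    qed
  qed (use vanish in simp)
  then have "\<forall>\<^sub>F x in at_right 0. ds k x = 0"
    using eventually_at_right_real[of 0 1] by (auto elim: eventually_mono)
  then have "(ds k \<longlongrightarrow> 0) (at_right 0)" by (rule tendsto_eventually)
  moreover have "(ds k \<longlongrightarrow> ds k 0) (at_right 0)"
    using DERIV_isCont[OF has_derivsD[OF ds k]] by (simp add: isCont_def filterlim_at_split)
  ultimately show False
    using tendsto_unique[OF trivial_limit_at_right_real] nonzero by blast
qed

section \<open>The three spectra\<close>

lemma dirichlet_laplacian_eig_imp_pos:
  assumes "dirichlet_laplacian_eig lam"
  shows "lam > 0"
proof (rule ccontr)
  assume nonpos: "\<not> lam > 0"
  obtain u where u: "has_derivs 2 u" and ode: "\<And>x. x \<in> {0<..<1} \<Longrightarrow> - u 2 x = lam * u 0 x"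
    and bc: "u 0 0 = 0" "u 0 1 = 0" and nontrivial: "\<exists>x\<in>{0<..<1}. u 0 x \<noteq> 0"
    using assms unfolding dirichlet_laplacian_eig_def by blast
  define F where "F x = - (u 0 x * u 1 x)" for x
  define F' where "F' x = - ((u 1 x)\<^sup>2 + u 0 x * u 2 x)" for x
  have F_deriv: "(F has_real_derivative F' x) (at x)" for x
    unfolding F_def F'_def using has_derivs_2D[OF u]
    by (auto intro!: derivative_eq_intros simp: power2_eq_square)
  have F'_eq: "F' x = lam * (u 0 x)\<^sup>2 - (u 1 x)\<^sup>2" if "x \<in> {0<..<1}" for x
  proof -
    have "u 2 x = - (lam * u 0 x)" using ode[OF that] by linarith
    then show ?thesis by (simp add: F'_def power2_eq_square algebra_simps)
  qed
  have lam_term_nonpos: "lam * (u 0 x)\<^sup>2 \<le> 0" for x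
    using nonpos by (simp add: mult_nonpos_nonneg)
  have F'_nonpos: "F' x \<le> 0" if "x \<in> {0<..<1}" for x
    using F'_eq[OF that] lam_term_nonpos[of x] zero_le_power2[of "u 1 x"] by linarith
  have u1_zero: "u 1 x = 0" if "x \<in> {0<..<1}" for x
  proof -
    have "F' x = 0"
      using DERIV_nonpos_eq_ends_imp_zero[OF F_deriv F'_nonpos _ that] bc by (simp add: F_def)
    then have "(u 1 x)\<^sup>2 \<le> 0" using F'_eq[OF that] lam_term_nonpos[of x] by linarith
    then show ?thesis by simp
  qed
  have "u 0 x = u 0 0" if "x \<in> {0..1}" for x
  proof (rule DERIV_isconst2[of 0 1])
    show "continuous_on {0..1} (u 0)" by (rule has_derivs_continuous_on[OF u]) simp
    show "(u 0 has_real_derivative 0) (at y)" if "0 < y" "y < 1" for y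
      using has_derivs_2D(1)[OF u, of y] u1_zero that by simp
  qed (use that in auto)
  moreover obtain x where "x \<in> {0<..<1}" "u 0 x \<noteq> 0" using nontrivial by blast
  ultimately show False using bc(1) by force
qed

lemma dirichlet_laplacian_eig_sq_iff:
  assumes "k > 0"
  shows "dirichlet_laplacian_eig (k\<^sup>2) \<longleftrightarrow> sin k = 0"
proof
  assume "dirichlet_laplacian_eig (k\<^sup>2)"
  then obtain u where u: "has_derivs 2 u" and ode: "\<And>x. x \<in> {0<..<1} \<Longrightarrow> - u 2 x = k\<^sup>2 * u 0 x"
    and bc: "u 0 0 = 0" "u 0 1 = 0" and nontrivial: "\<exists>x\<in>{0<..<1}. u 0 x \<noteq> 0"
    unfolding dirichlet_laplacian_eig_def by blast
  define c where "c = u 1 0 / k"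
  define w where "w i x = u i x - c * sin_derivs k i x" for i x
  have w: "has_derivs 2 w"
    unfolding w_def by (intro has_derivs_diff has_derivs_cmult u has_derivs_sin_derivs)
  have w_zero: "w 0 x = 0" if "x \<in> {0..1}" for x
  proof (rule linear_ode_zero_initial_data[OF w _ _ _ that, where a = "\<lambda>i. - k\<^sup>2 * of_bool (i = 0)"])
    show "w 2 x = (\<Sum>i<2. - k\<^sup>2 * of_bool (i = 0) * w i x)" if "x \<in> {0<..<1}" for x
      using ode[OF that] by (simp add: w_def eval_nat_numeral algebra_simps power2_eq_square)
    show "w i 0 = 0" if "i < 2" for i
      using that assms bc by (auto simp: w_def c_def less_2_cases_iff)
  qed simp
  have "c \<noteq> 0"
    using nontrivial w_zero by (auto simp: w_def)
  moreover have "c * sin k = 0"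
    using w_zero[of 1] bc by (simp add: w_def)
  ultimately show "sin k = 0" by simp
next
  assume "sin k = 0"
  have u: "has_derivs 2 (sin_derivs k)" by (rule has_derivs_sin_derivs)
  moreover have "\<exists>x\<in>{0<..<1}. sin_derivs k 0 x \<noteq> 0"
    using assms by (intro has_derivs_nontrivial_if_deriv_at_0[OF u, of 1]) auto
  ultimately show "dirichlet_laplacian_eig (k\<^sup>2)"
    unfolding dirichlet_laplacian_eig_def using \<open>sin k = 0\<close>
    by (intro exI[of _ "sin_derivs k"]) (simp add: eval_nat_numeral power2_eq_square)
qed

lemma dirichlet_laplacian_eig_iff:
  "dirichlet_laplacian_eig lam \<longleftrightarrow> (\<exists>m. lam = (real (Suc m) * pi)\<^sup>2)"
proof (cases "lam > 0")
  case False
  then show ?thesis using dirichlet_laplacian_eig_imp_pos by auto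
next
  case True
  define k where "k = sqrt lam"
  have k: "k > 0" "lam = k\<^sup>2" using True by (auto simp: k_def)
  have "dirichlet_laplacian_eig lam \<longleftrightarrow> sin k = 0"
    using dirichlet_laplacian_eig_sq_iff k by simp
  also have "\<dots> \<longleftrightarrow> (\<exists>m. k = real (Suc m) * pi)"
  proof
    assume "sin k = 0"
    then obtain i :: int where i: "k = of_int i * pi" by (auto simp: sin_zero_iff_int2)
    with k have "i > 0" by (simp add: zero_less_mult_iff)
    with i show "\<exists>m. k = real (Suc m) * pi"
      by (intro exI[of _ "nat i - 1"]) (simp add: of_nat_diff)
  next
    assume "\<exists>m. k = real (Suc m) * pi"
    then show "sin k = 0" by (metis sin_npi)
  qed
  also have "\<dots> \<longleftrightarrow> (\<exists>m. lam = (real (Suc m) * pi)\<^sup>2)"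
    using k by (simp add: power2_eq_iff_nonneg)
  finally show ?thesis .
qed

definition clamped_eig :: "real \<Rightarrow> real \<Rightarrow> bool" where
  "clamped_eig \<Lambda> \<sigma> \<longleftrightarrow>
     (\<exists>u. has_derivs 4 u \<and> (\<forall>x\<in>{0<..<1}. u 4 x = \<Lambda> * u 0 x - \<sigma> * u 2 x) \<and>
        u 0 0 = 0 \<and> u 1 0 = 0 \<and> u 0 1 = 0 \<and> u 1 1 = 0 \<and> (\<exists>x\<in>{0<..<1}. u 0 x \<noteq> 0))"

lemma buckling_eig_iff_clamped_eig: "buckling_eig \<sigma> \<longleftrightarrow> clamped_eig 0 \<sigma>"
  unfolding buckling_eig_def clamped_eig_def by simp

lemma dirichlet_bilaplacian_eig_iff_clamped_eig:
  "dirichlet_bilaplacian_eig \<Lambda> \<longleftrightarrow> clamped_eig \<Lambda> 0"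
  unfolding dirichlet_bilaplacian_eig_def clamped_eig_def by simp

lemma clamped_ode_zero_initial_data:
  assumes "has_derivs 4 w" "\<And>x. x \<in> {0<..<1} \<Longrightarrow> w 4 x = \<Lambda> * w 0 x - \<sigma> * w 2 x"
    and "\<And>i. i < 4 \<Longrightarrow> w i 0 = 0" "k < 4" "x \<in> {0..1}"
  shows "w k x = 0"
  by (rule linear_ode_zero_initial_data[OF assms(1) _ assms(3-5),
        where a = "\<lambda>i. \<Lambda> * of_bool (i = 0) - \<sigma> * of_bool (i = 2)"])
    (use assms(2) in \<open>simp add: eval_nat_numeral\<close>)

lemma clamped_eig_nonpos_params:
  assumes "\<Lambda> \<le> 0" "\<sigma> \<le> 0"
  shows "\<not> clamped_eig \<Lambda> \<sigma>"
proof
  assume "clamped_eig \<Lambda> \<sigma>"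
  then obtain u where u: "has_derivs 4 u"
    and ode: "\<And>x. x \<in> {0<..<1} \<Longrightarrow> u 4 x = \<Lambda> * u 0 x - \<sigma> * u 2 x"
    and bc: "u 0 0 = 0" "u 1 0 = 0" "u 0 1 = 0" "u 1 1 = 0"
    and nontrivial: "\<exists>x\<in>{0<..<1}. u 0 x \<noteq> 0"
    unfolding clamped_eig_def by blast
  define G where "G x = u 0 x * u 3 x - u 1 x * u 2 x + \<sigma> * (u 0 x * u 1 x)" for x
  define G' where "G' x = u 0 x * u 4 x - (u 2 x)\<^sup>2 + \<sigma> * ((u 1 x)\<^sup>2 + u 0 x * u 2 x)" for x
  have G_deriv: "(G has_real_derivative G' x) (at x)" for x
    unfolding G_def G'_def using has_derivs_4D[OF u]
    by (auto intro!: derivative_eq_intros simp: power2_eq_square algebra_simps)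
  have G'_eq: "G' x = \<Lambda> * (u 0 x)\<^sup>2 + \<sigma> * (u 1 x)\<^sup>2 - (u 2 x)\<^sup>2" if "x \<in> {0<..<1}" for x
    unfolding G'_def ode[OF that] by (simp add: power2_eq_square algebra_simps)
  have terms_nonpos: "\<Lambda> * (u 0 x)\<^sup>2 \<le> 0" "\<sigma> * (u 1 x)\<^sup>2 \<le> 0" for x
    using assms by (simp_all add: mult_nonpos_nonneg)
  have u2_zero: "u 2 x = 0" if "x \<in> {0<..<1}" for x
  proof -
    have G'_nonpos: "G' y \<le> 0" if "y \<in> {0<..<1}" for y
      using G'_eq[OF that] terms_nonpos[of y] zero_le_power2[of "u 2 y"] by linarith
    have "G' x = 0"
      using DERIV_nonpos_eq_ends_imp_zero[OF G_deriv G'_nonpos _ that] bc by (simp add: G_def)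
    then have "(u 2 x)\<^sup>2 \<le> 0" using G'_eq[OF that] terms_nonpos[of x] by linarith
    then show ?thesis by simp
  qed
  have u2: "has_derivs 2 u" using has_derivs_mono[OF u] by simp
  have "u 0 x = 0" if "x \<in> {0..1}" for x
    by (rule linear_ode_zero_initial_data[OF u2 _ _ _ that, where a = "\<lambda>_. 0"])
      (use u2_zero bc in \<open>auto simp: less_2_cases_iff\<close>)
  with nontrivial show False by auto
qed

lemma det2_eq_0_iff_nontrivial_kernel:
  fixes a b c d :: "'a::field"
  shows "a * d - b * c = 0 \<longleftrightarrow> (\<exists>x y. (x \<noteq> 0 \<or> y \<noteq> 0) \<and> a * x + b * y = 0 \<and> c * x + d * y = 0)"
proof
  assume det: "a * d - b * c = 0"
  consider "a \<noteq> 0 \<or> b \<noteq> 0" | "c \<noteq> 0 \<or> d \<noteq> 0" | "a = 0" "b = 0" "c = 0" "d = 0" by blast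
  then show "\<exists>x y. (x \<noteq> 0 \<or> y \<noteq> 0) \<and> a * x + b * y = 0 \<and> c * x + d * y = 0"
  proof cases
    case 1
    with det show ?thesis by (intro exI[of _ b] exI[of _ "- a"]) (auto simp: algebra_simps)
  next
    case 2
    with det show ?thesis by (intro exI[of _ d] exI[of _ "- c"]) (auto simp: algebra_simps)
  qed (intro exI[of _ 1] exI[of _ 0]; simp)
next
  assume "\<exists>x y. (x \<noteq> 0 \<or> y \<noteq> 0) \<and> a * x + b * y = 0 \<and> c * x + d * y = 0"
  then obtain x y where xy: "x \<noteq> 0 \<or> y \<noteq> 0" "a * x + b * y = 0" "c * x + d * y = 0" by blast
  have "x * (a * d - b * c) = d * (a * x + b * y) - b * (c * x + d * y)"
    and "y * (a * d - b * c) = a * (c * x + d * y) - c * (a * x + b * y)"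
    by (simp_all add: algebra_simps)
  with xy show "a * d - b * c = 0" by auto
qed

text \<open>\<open>\<phi>\<close> and \<open>\<psi>\<close> span the solutions vanishing to first order at 0, so clamping
  at 1 becomes a homogeneous \<open>2 \<times> 2\<close> system for their coefficients.\<close>

locale clamped_fundamental_pair =
  fixes \<Lambda> \<sigma> :: real and \<phi> \<psi> :: "nat \<Rightarrow> real \<Rightarrow> real"
  assumes \<phi>: "has_derivs 4 \<phi>" and \<psi>: "has_derivs 4 \<psi>"
    and \<phi>_ode: "\<And>x. \<phi> 4 x = \<Lambda> * \<phi> 0 x - \<sigma> * \<phi> 2 x"
    and \<psi>_ode: "\<And>x. \<psi> 4 x = \<Lambda> * \<psi> 0 x - \<sigma> * \<psi> 2 x"
    and \<phi>_init: "\<phi> 0 0 = 0" "\<phi> 1 0 = 0" "\<phi> 2 0 \<noteq> 0" "\<phi> 3 0 = 0"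
    and \<psi>_init: "\<psi> 0 0 = 0" "\<psi> 1 0 = 0" "\<psi> 2 0 = 0" "\<psi> 3 0 \<noteq> 0"
begin

definition comb :: "real \<Rightarrow> real \<Rightarrow> nat \<Rightarrow> real \<Rightarrow> real" where
  "comb g h i x = g * \<phi> i x + h * \<psi> i x"

lemma has_derivs_comb: "has_derivs 4 (comb g h)"
  unfolding comb_def by (intro has_derivs_add has_derivs_cmult \<phi> \<psi>)

lemma comb_ode: "comb g h 4 x = \<Lambda> * comb g h 0 x - \<sigma> * comb g h 2 x"
  by (simp add: comb_def \<phi>_ode \<psi>_ode algebra_simps)

lemma clamped_eig_imp_kernel:
  assumes "clamped_eig \<Lambda> \<sigma>"
  shows "\<exists>g h. (g \<noteq> 0 \<or> h \<noteq> 0) \<and> \<phi> 0 1 * g + \<psi> 0 1 * h = 0 \<and> \<phi> 1 1 * g + \<psi> 1 1 * h = 0"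
proof -
  obtain u where u: "has_derivs 4 u"
    and ode: "\<And>x. x \<in> {0<..<1} \<Longrightarrow> u 4 x = \<Lambda> * u 0 x - \<sigma> * u 2 x"
    and bc: "u 0 0 = 0" "u 1 0 = 0" "u 0 1 = 0" "u 1 1 = 0"
    and nontrivial: "\<exists>x\<in>{0<..<1}. u 0 x \<noteq> 0"
    using assms unfolding clamped_eig_def by blast
  define g h where "g = u 2 0 / \<phi> 2 0" and "h = u 3 0 / \<psi> 3 0"
  have u_eq: "u i x = comb g h i x" if "i < 4" "x \<in> {0..1}" for i x
  proof -
    have "u i x - comb g h i x = 0"
    proof (rule clamped_ode_zero_initial_data[OF has_derivs_diff[OF u has_derivs_comb] _ _ that])
      show "u 4 x - comb g h 4 x = \<Lambda> * (u 0 x - comb g h 0 x) - \<sigma> * (u 2 x - comb g h 2 x)"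
        if "x \<in> {0<..<1}" for x
        using ode[OF that] comb_ode[of g h x] by (simp add: algebra_simps)
      show "u j 0 - comb g h j 0 = 0" if "j < 4" for j
        using that bc \<phi>_init \<psi>_init
        by (auto simp: comb_def g_def h_def eval_nat_numeral less_Suc_eq)
    qed
    then show ?thesis by simp
  qed
  show ?thesis
  proof (intro exI conjI)
    show "g \<noteq> 0 \<or> h \<noteq> 0"
      using nontrivial u_eq[of 0] by (auto simp: comb_def)
    show "\<phi> 0 1 * g + \<psi> 0 1 * h = 0" "\<phi> 1 1 * g + \<psi> 1 1 * h = 0"
      using u_eq[of 0 1] u_eq[of 1 1] bc by (simp_all add: comb_def mult.commute)
  qed
qed

lemma kernel_imp_clamped_eig:
  assumes gh: "g \<noteq> 0 \<or> h \<noteq> 0"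
    and kernel: "\<phi> 0 1 * g + \<psi> 0 1 * h = 0" "\<phi> 1 1 * g + \<psi> 1 1 * h = 0"
  shows "clamped_eig \<Lambda> \<sigma>"
proof -
  have "\<exists>x\<in>{0<..<1}. comb g h 0 x \<noteq> 0"
  proof (cases "g = 0")
    case True
    with gh \<phi>_init \<psi>_init show ?thesis
      by (intro has_derivs_nontrivial_if_deriv_at_0[OF has_derivs_comb, of 3]) (auto simp: comb_def)
  next
    case False
    with \<phi>_init \<psi>_init show ?thesis
      by (intro has_derivs_nontrivial_if_deriv_at_0[OF has_derivs_comb, of 2]) (auto simp: comb_def)
  qed
  with has_derivs_comb comb_ode kernel \<phi>_init \<psi>_init show ?thesis
    unfolding clamped_eig_def by (intro exI[of _ "comb g h"]) (auto simp: comb_def mult.commute)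
qed

lemma clamped_eig_iff_det: "clamped_eig \<Lambda> \<sigma> \<longleftrightarrow> \<phi> 0 1 * \<psi> 1 1 - \<psi> 0 1 * \<phi> 1 1 = 0"
  unfolding det2_eq_0_iff_nontrivial_kernel
  using clamped_eig_imp_kernel kernel_imp_clamped_eig by blast

end

lemma buckling_eig_sq_iff:
  assumes k: "k > 0"
  shows "buckling_eig (k\<^sup>2) \<longleftrightarrow> 2 - 2 * cos k - k * sin k = 0"
proof -
  define \<phi> where "\<phi> i x = cos_derivs k i x - affine_derivs 1 0 i x" for i x
  define \<psi> where "\<psi> i x = sin_derivs k i x - affine_derivs 0 k i x" for i x
  interpret clamped_fundamental_pair 0 "k\<^sup>2" \<phi> \<psi>
  proof unfold_locales
    show "has_derivs 4 \<phi>" "has_derivs 4 \<psi>" unfolding \<phi>_def \<psi>_def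
      by (intro has_derivs_diff has_derivs_cos_derivs has_derivs_sin_derivs has_derivs_affine_derivs)+
    show "\<phi> 4 x = 0 * \<phi> 0 x - k\<^sup>2 * \<phi> 2 x" "\<psi> 4 x = 0 * \<psi> 0 x - k\<^sup>2 * \<psi> 2 x" for x
      by (simp_all add: \<phi>_def \<psi>_def eval_nat_numeral affine_derivs_def power2_eq_square)
    show "\<phi> 0 0 = 0" "\<phi> 1 0 = 0" "\<phi> 2 0 \<noteq> 0" "\<phi> 3 0 = 0"
      "\<psi> 0 0 = 0" "\<psi> 1 0 = 0" "\<psi> 2 0 = 0" "\<psi> 3 0 \<noteq> 0"
      using k by (simp_all add: \<phi>_def \<psi>_def eval_nat_numeral affine_derivs_def)
  qed
  have "\<phi> 0 1 = cos k - 1" "\<phi> 1 1 = - k * sin k" "\<psi> 0 1 = sin k - k" "\<psi> 1 1 = k * cos k - k"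
    by (simp_all add: \<phi>_def \<psi>_def affine_derivs_def)
  then have "\<phi> 0 1 * \<psi> 1 1 - \<psi> 0 1 * \<phi> 1 1 = k * (2 - 2 * cos k - k * sin k)"
    using sin_cos_squared_add[of k] by algebra
  with k show ?thesis
    by (simp add: buckling_eig_iff_clamped_eig clamped_eig_iff_det)
qed

lemma buckling_det_double_angle:
  fixes t :: real
  shows "2 - 2 * cos (2 * t) - 2 * t * sin (2 * t) = 4 * sin t * (sin t - t * cos t)"
proof -
  have "2 - 2 * cos (2 * t) - 2 * t * sin (2 * t)
      = 2 - 2 * (1 - 2 * (sin t)\<^sup>2) - 2 * t * (2 * sin t * cos t)"
    by (simp add: cos_double_sin sin_double)
  also have "\<dots> = 4 * sin t * (sin t - t * cos t)"
    by (simp add: algebra_simps power2_eq_square)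
  finally show ?thesis .
qed

lemma buckling_eig_iff:
  "buckling_eig \<sigma> \<longleftrightarrow> (\<exists>t>0. \<sigma> = (2 * t)\<^sup>2 \<and> sin t * (sin t - t * cos t) = 0)"
proof (cases "\<sigma> > 0")
  case False
  then show ?thesis
    using clamped_eig_nonpos_params[of 0 \<sigma>] by (auto simp: buckling_eig_iff_clamped_eig)
next
  case True
  define t where "t = sqrt \<sigma> / 2"
  have t: "t > 0" "\<sigma> = (2 * t)\<^sup>2" using True by (auto simp: t_def)
  have "buckling_eig \<sigma> \<longleftrightarrow> sin t * (sin t - t * cos t) = 0"
    using buckling_eig_sq_iff[of "2 * t"] buckling_det_double_angle[of t] t by simp
  also have "\<dots> \<longleftrightarrow> (\<exists>t'>0. \<sigma> = (2 * t')\<^sup>2 \<and> sin t' * (sin t' - t' * cos t') = 0)"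
  proof
    assume "sin t * (sin t - t * cos t) = 0"
    with t show "\<exists>t'>0. \<sigma> = (2 * t')\<^sup>2 \<and> sin t' * (sin t' - t' * cos t') = 0" by blast
  next
    assume "\<exists>t'>0. \<sigma> = (2 * t')\<^sup>2 \<and> sin t' * (sin t' - t' * cos t') = 0"
    then obtain t' where t': "t' > 0" "\<sigma> = (2 * t')\<^sup>2" "sin t' * (sin t' - t' * cos t') = 0"
      by blast
    then have "t = t'" unfolding t_def using real_sqrt_unique[of "2 * t'" \<sigma>] by simp
    with t' show "sin t * (sin t - t * cos t) = 0" by simp
  qed
  finally show ?thesis .
qed

lemma dirichlet_bilaplacian_eig_pow4_iff:
  assumes k: "k > 0"
  shows "dirichlet_bilaplacian_eig (k ^ 4) \<longleftrightarrow> cos k * cosh k = 1"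
proof -
  define \<phi> where "\<phi> i x = cosh_derivs k i x - cos_derivs k i x" for i x
  define \<psi> where "\<psi> i x = sinh_derivs k i x - sin_derivs k i x" for i x
  interpret clamped_fundamental_pair "k ^ 4" 0 \<phi> \<psi>
  proof unfold_locales
    show "has_derivs 4 \<phi>" "has_derivs 4 \<psi>" unfolding \<phi>_def \<psi>_def
      by (intro has_derivs_diff has_derivs_cos_derivs has_derivs_sin_derivs
          has_derivs_cosh_derivs has_derivs_sinh_derivs)+
    show "\<phi> 4 x = k ^ 4 * \<phi> 0 x - 0 * \<phi> 2 x" "\<psi> 4 x = k ^ 4 * \<psi> 0 x - 0 * \<psi> 2 x" for x
      by (simp_all add: \<phi>_def \<psi>_def eval_nat_numeral algebra_simps)
    show "\<phi> 0 0 = 0" "\<phi> 1 0 = 0" "\<phi> 2 0 \<noteq> 0" "\<phi> 3 0 = 0"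
      "\<psi> 0 0 = 0" "\<psi> 1 0 = 0" "\<psi> 2 0 = 0" "\<psi> 3 0 \<noteq> 0"
      using k by (simp_all add: \<phi>_def \<psi>_def eval_nat_numeral)
  qed
  have "\<phi> 0 1 = cosh k - cos k" "\<phi> 1 1 = k * sinh k + k * sin k"
    "\<psi> 0 1 = sinh k - sin k" "\<psi> 1 1 = k * cosh k - k * cos k"
    by (simp_all add: \<phi>_def \<psi>_def)
  then have "\<phi> 0 1 * \<psi> 1 1 - \<psi> 0 1 * \<phi> 1 1 = 2 * k * (1 - cos k * cosh k)"
    using sin_cos_squared_add[of k] hyperbolic_pythagoras[of k] by algebra
  with k show ?thesis
    by (simp add: dirichlet_bilaplacian_eig_iff_clamped_eig clamped_eig_iff_det)
qed

lemma dirichlet_bilaplacian_eig_iff: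
  "dirichlet_bilaplacian_eig \<Lambda> \<longleftrightarrow> (\<exists>k>0. \<Lambda> = k ^ 4 \<and> cos k * cosh k = 1)"
proof (cases "\<Lambda> > 0")
  case False
  then show ?thesis
    using clamped_eig_nonpos_params[of \<Lambda> 0] by (auto simp: dirichlet_bilaplacian_eig_iff_clamped_eig)
next
  case True
  define k where "k = root 4 \<Lambda>"
  have k: "k > 0" "\<Lambda> = k ^ 4" using True by (auto simp: k_def real_root_pow_pos2)
  have "dirichlet_bilaplacian_eig \<Lambda> \<longleftrightarrow> cos k * cosh k = 1"
    using dirichlet_bilaplacian_eig_pow4_iff k by simp
  also have "\<dots> \<longleftrightarrow> (\<exists>k'>0. \<Lambda> = k' ^ 4 \<and> cos k' * cosh k' = 1)"
  proof
    assume "cos k * cosh k = 1"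
    with k show "\<exists>k'>0. \<Lambda> = k' ^ 4 \<and> cos k' * cosh k' = 1" by blast
  next
    assume "\<exists>k'>0. \<Lambda> = k' ^ 4 \<and> cos k' * cosh k' = 1"
    then obtain k' where k': "k' > 0" "\<Lambda> = k' ^ 4" "cos k' * cosh k' = 1" by blast
    then have "k = k'" unfolding k_def using real_root_pos_unique[of 4 k' \<Lambda>] by simp
    with k' show "cos k * cosh k = 1" by simp
  qed
  finally show ?thesis .
qed

section \<open>Roots of the characteristic equations\<close>

lemma ex_pi_interval:
  assumes "0 \<le> t"
  obtains m :: nat where "real m * pi \<le> t" "t < real (Suc m) * pi"
proof -
  define m where "m = nat \<lfloor>t / pi\<rfloor>"
  have m: "real m = of_int \<lfloor>t / pi\<rfloor>" using assms by (simp add: m_def)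
  show ?thesis
  proof (rule that[of m])
    show "real m * pi \<le> t" using floor_divide_lower[of pi t] by (simp add: m)
    show "t < real (Suc m) * pi" using floor_divide_upper[of pi t] by (simp add: m algebra_simps)
  qed
qed

lemma DERIV_pos_imp_strict_mono_on:
  fixes f f' :: "real \<Rightarrow> real"
  assumes deriv: "\<And>x. (f has_real_derivative f' x) (at x)"
    and pos: "\<And>x. x \<in> {a<..<b} \<Longrightarrow> f' x > 0"
  shows "strict_mono_on {a..b} f"
proof (rule strict_mono_onI)
  fix r s assume rs: "r \<in> {a..b}" "s \<in> {a..b}" "r < s"
  show "f r < f s"
  proof (rule DERIV_pos_imp_increasing_open[OF \<open>r < s\<close>])
    fix x assume "r < x" "x < s"
    with rs show "\<exists>y. (f has_real_derivative y) (at x) \<and> 0 < y"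
      using deriv pos by force
  next
    show "continuous_on {r..s} f"
      using deriv by (meson DERIV_isCont continuous_at_imp_continuous_on)
  qed
qed

lemma strict_mono_on_ex1_root:
  fixes f :: "real \<Rightarrow> real"
  assumes mono: "strict_mono_on {a..b} f" and cont: "continuous_on {a..b} f"
    and "a \<le> b" "f a \<le> c" "c \<le> f b"
  shows "\<exists>!x. x \<in> {a..b} \<and> f x = c"
proof (rule ex_ex1I)
  show "\<exists>x. x \<in> {a..b} \<and> f x = c"
    using IVT'[of f a c b] assms by auto
  show "x = y" if "x \<in> {a..b} \<and> f x = c" "y \<in> {a..b} \<and> f y = c" for x y
    using strict_mono_on_eqD[OF mono, of y x] that by auto
qed

lemma sin_cos_shift_pi_multiple:
  "sin (x - real m * pi) = (-1) ^ m * sin x" "cos (x - real m * pi) = (-1) ^ m * cos x"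
  by (simp_all add: sin_diff cos_diff)

lemma sin_minus_id_cos_strict_mono_on:
  "strict_mono_on {real m * pi..real (Suc m) * pi} (\<lambda>t. (-1) ^ m * (sin t - t * cos t))"
proof (rule DERIV_pos_imp_strict_mono_on)
  show "((\<lambda>t. (-1) ^ m * (sin t - t * cos t)) has_real_derivative (-1) ^ m * (t * sin t)) (at t)" for t
    by (auto intro!: derivative_eq_intros)
  fix t assume t: "t \<in> {real m * pi<..<real (Suc m) * pi}"
  have "0 < sin (t - real m * pi)"
    using t by (intro sin_gt_zero) (auto simp: algebra_simps)
  moreover have "0 < t"
    using t by (auto intro: le_less_trans[of 0 "real m * pi"])
  ultimately show "0 < (-1) ^ m * (t * sin t)"
    by (simp add: sin_cos_shift_pi_multiple mult.left_commute)
qed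

lemma sin_minus_id_cos_at_pi_multiples:
  "(-1) ^ m * (sin (real m * pi) - real m * pi * cos (real m * pi)) = - (real m * pi)"
  "(-1) ^ m * (sin (real m * pi + pi / 2) - (real m * pi + pi / 2) * cos (real m * pi + pi / 2)) = 1"
  "(-1) ^ m * (sin (real (Suc m) * pi) - real (Suc m) * pi * cos (real (Suc m) * pi)) = real (Suc m) * pi"
  by (cases "even m"; simp add: sin_add cos_add del: of_nat_Suc)+

definition tan_root :: "nat \<Rightarrow> real" where
  "tan_root m = (THE t. t \<in> {real m * pi..real (Suc m) * pi} \<and> sin t = t * cos t)"

lemma tan_root_ex1: "\<exists>!t. t \<in> {real m * pi..real (Suc m) * pi} \<and> sin t = t * cos t"
proof -
  let ?f = "\<lambda>t. (-1) ^ m * (sin t - t * cos t)"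
  have "\<exists>!t. t \<in> {real m * pi..real (Suc m) * pi} \<and> ?f t = 0"
  proof (rule strict_mono_on_ex1_root[OF sin_minus_id_cos_strict_mono_on])
    show "continuous_on {real m * pi..real (Suc m) * pi} ?f"
      by (intro continuous_intros)
    show "?f (real m * pi) \<le> 0" "0 \<le> ?f (real (Suc m) * pi)"
      unfolding sin_minus_id_cos_at_pi_multiples by simp_all
  qed simp
  then show ?thesis by simp
qed

lemma tan_root:
  "tan_root m \<in> {real m * pi..real (Suc m) * pi}" "sin (tan_root m) = tan_root m * cos (tan_root m)"
  using theI'[OF tan_root_ex1[of m]] unfolding tan_root_def by auto

lemma tan_root_unique:
  "t \<in> {real m * pi..real (Suc m) * pi} \<Longrightarrow> sin t = t * cos t \<Longrightarrow> t = tan_root m"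
  using tan_root_ex1[of m] tan_root[of m] by blast

lemma tan_root_bounds:
  assumes "1 \<le> m"
  shows "real m * pi < tan_root m" "tan_root m < real m * pi + pi / 2"
proof -
  let ?f = "\<lambda>t. (-1) ^ m * (sin t - t * cos t)"
  note mono = strict_mono_on_less[OF sin_minus_id_cos_strict_mono_on[of m]]
  have root: "?f (tan_root m) = 0" using tan_root[of m] by simp
  have "?f (real m * pi) < 0" using assms by (simp only: sin_minus_id_cos_at_pi_multiples) simp
  with root show "real m * pi < tan_root m"
    using mono[of "real m * pi" "tan_root m"] tan_root(1)[of m] by auto
  have "?f (real m * pi + pi / 2) = 1" by (rule sin_minus_id_cos_at_pi_multiples)
  moreover have "real m * pi + pi / 2 \<in> {real m * pi..real (Suc m) * pi}"
    using pi_gt_zero by (simp add: algebra_simps)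
  ultimately show "tan_root m < real m * pi + pi / 2"
    using root mono[of "tan_root m" "real m * pi + pi / 2"] tan_root(1)[of m] by auto
qed

lemma tan_root_0: "tan_root 0 = 0"
  by (rule tan_root_unique[symmetric]) auto

lemma tan_root_complete:
  assumes "0 < t" "sin t = t * cos t"
  shows "\<exists>m\<ge>1. t = tan_root m"
proof -
  obtain m :: nat where m: "real m * pi \<le> t" "t < real (Suc m) * pi"
    using ex_pi_interval assms(1) by (metis less_imp_le)
  then have "t = tan_root m" using assms by (intro tan_root_unique) auto
  moreover have "m \<noteq> 0" using calculation assms(1) tan_root_0 by (cases m) auto
  ultimately show ?thesis by (intro exI[of _ m]) auto
qed

lemma sinh_ge_self:
  fixes x :: real
  assumes "0 \<le> x"
  shows "x \<le> sinh x"
proof -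
  have "(\<lambda>t. sinh t - t) 0 \<le> (\<lambda>t. sinh t - t) x"
  proof (rule DERIV_nonneg_imp_nondecreasing[OF assms])
    fix t
    show "\<exists>y. ((\<lambda>t. sinh t - t) has_real_derivative y) (at t) \<and> 0 \<le> y"
      by (intro exI[of _ "cosh t - 1"] conjI) (auto intro!: derivative_eq_intros simp: cosh_real_ge_1)
  qed
  then show ?thesis by simp
qed

lemma cosh_ge_1_plus_half_sq:
  fixes x :: real
  shows "1 + x\<^sup>2 / 2 \<le> cosh x"
proof -
  define y where "y = \<bar>x\<bar> / 2"
  have "y \<le> sinh y" by (rule sinh_ge_self) (simp add: y_def)
  then have "y\<^sup>2 \<le> (sinh y)\<^sup>2" by (intro power_mono) (auto simp: y_def)
  moreover have "cosh x = 1 + 2 * (sinh y)\<^sup>2"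
    using cosh_double[of y] cosh_square_eq[of y] by (simp add: y_def)
  moreover have "x\<^sup>2 = 4 * y\<^sup>2" by (simp add: y_def power_divide)
  ultimately show ?thesis by linarith
qed

lemma cosh_gt_2:
  assumes "pi \<le> x"
  shows "2 < cosh x"
proof -
  have "2 \<le> x" using assms pi_ge_two by linarith
  then have "2\<^sup>2 \<le> x\<^sup>2" by (intro power_mono) auto
  then show ?thesis using cosh_ge_1_plus_half_sq[of x] by simp
qed

lemma sin_ge_half_self:
  fixes d :: real
  assumes "0 \<le> d" "d \<le> pi / 3"
  shows "d / 2 \<le> sin d"
proof -
  have "(\<lambda>x. sin x - x / 2) 0 \<le> (\<lambda>x. sin x - x / 2) d"
  proof (rule DERIV_nonneg_imp_nondecreasing[OF assms(1)])
    fix x assume x: "0 \<le> x" "x \<le> d"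
    have "cos (pi / 3) \<le> cos x" by (rule cos_monotone_0_pi_le) (use x assms in auto)
    then show "\<exists>y. ((\<lambda>x. sin x - x / 2) has_real_derivative y) (at x) \<and> 0 \<le> y"
      by (intro exI[of _ "cos x - 1 / 2"] conjI) (auto intro!: derivative_eq_intros simp: cos_60)
  qed
  then show ?thesis by simp
qed

lemma middle_third_trig_bounds:
  fixes r :: real
  assumes "pi / 3 \<le> r" "r \<le> 2 * pi / 3"
  shows "\<bar>cos r\<bar> \<le> 1 / 2" "1 / 2 \<le> sin r"
proof -
  have "cos r \<le> cos (pi / 3)" "cos (2 * pi / 3) \<le> cos r"
    using assms by (intro cos_monotone_0_pi_le; simp)+
  then show cos_bound: "\<bar>cos r\<bar> \<le> 1 / 2" by (simp add: cos_60 cos_120)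
  have "0 \<le> sin r" using assms by (intro sin_ge_zero) auto
  show "1 / 2 \<le> sin r"
  proof (rule ccontr)
    assume "\<not> 1 / 2 \<le> sin r"
    with \<open>0 \<le> sin r\<close> have "sin r * sin r < 1 / 2 * (1 / 2)"
      by (intro mult_strict_mono') auto
    moreover have "cos r * cos r \<le> 1 / 2 * (1 / 2)"
      using mult_mono[OF cos_bound cos_bound] by (simp add: abs_mult_self_eq)
    ultimately show False using sin_cos_squared_add3[of r] by linarith
  qed
qed

lemma abs_cos_lt_half_imp_middle_third:
  fixes r :: real
  assumes "0 \<le> r" "r \<le> pi" "\<bar>cos r\<bar> < 1 / 2"
  shows "pi / 3 < r" "r < 2 * pi / 3"
proof -
  show "pi / 3 < r"
  proof (rule ccontr)
    assume "\<not> pi / 3 < r"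
    then have "cos (pi / 3) \<le> cos r" using assms by (intro cos_monotone_0_pi_le) auto
    with assms show False by (simp add: cos_60)
  qed
  show "r < 2 * pi / 3"
  proof (rule ccontr)
    assume "\<not> r < 2 * pi / 3"
    then have "cos r \<le> cos (2 * pi / 3)" using assms by (intro cos_monotone_0_pi_le) auto
    with assms show False by (simp add: cos_120)
  qed
qed

lemma cos_cosh_strict_mono_on:
  "strict_mono_on {real m * pi + pi / 3..real m * pi + 2 * pi / 3}
     (\<lambda>x. (-1) ^ Suc m * (cos x * cosh x))"
proof (rule DERIV_pos_imp_strict_mono_on)
  show "((\<lambda>x. (-1) ^ Suc m * (cos x * cosh x)) has_real_derivative
      (-1) ^ m * (sin x * cosh x - cos x * sinh x)) (at x)" for x
    by (auto intro!: derivative_eq_intros simp: algebra_simps)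
  fix x assume x: "x \<in> {real m * pi + pi / 3<..<real m * pi + 2 * pi / 3}"
  define r where "r = x - real m * pi"
  have "pi / 3 \<le> r" "r \<le> 2 * pi / 3" using x by (auto simp: r_def)
  note bounds = middle_third_trig_bounds[OF this]
  have "real m * pi + pi / 3 < x" "0 \<le> real m * pi" using x by simp_all
  then have "0 < x" using pi_gt_zero by linarith
  then have sinh: "0 \<le> sinh x" "sinh x < cosh x" by (simp_all add: sinh_less_cosh_real)
  have "cos r * sinh x \<le> 1 / 2 * sinh x"
    using bounds(1) sinh(1) by (intro mult_right_mono) auto
  also have "\<dots> < 1 / 2 * cosh x" using sinh by simp
  also have "\<dots> \<le> sin r * cosh x"
    using bounds(2) by (intro mult_right_mono) auto
  finally have "cos r * sinh x < sin r * cosh x" .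
  then show "0 < (-1) ^ m * (sin x * cosh x - cos x * sinh x)"
    unfolding r_def sin_cos_shift_pi_multiple by (simp add: algebra_simps)
qed

definition cos_cosh_root :: "nat \<Rightarrow> real" where
  "cos_cosh_root m =
     (THE x. x \<in> {real m * pi + pi / 3..real m * pi + 2 * pi / 3} \<and> cos x * cosh x = 1)"

lemma cos_cosh_root_ex1:
  assumes "1 \<le> m"
  shows "\<exists>!x. x \<in> {real m * pi + pi / 3..real m * pi + 2 * pi / 3} \<and> cos x * cosh x = 1"
proof -
  let ?f = "\<lambda>x. (-1) ^ Suc m * (cos x * cosh x)"
  have sign: "- 1 \<le> (-1::real) ^ Suc m" "(-1::real) ^ Suc m \<le> 1"
    by (cases "even m"; simp)+
  have "pi \<le> real m * pi" using assms by simp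
  then have far: "pi \<le> real m * pi + pi / 3" "pi \<le> real m * pi + 2 * pi / 3"
    using pi_gt_zero by linarith+
  have "\<exists>!x. x \<in> {real m * pi + pi / 3..real m * pi + 2 * pi / 3} \<and> ?f x = (-1) ^ Suc m"
  proof (rule strict_mono_on_ex1_root[OF cos_cosh_strict_mono_on])
    show "continuous_on {real m * pi + pi / 3..real m * pi + 2 * pi / 3} ?f"
      by (intro continuous_intros)
    have "?f (real m * pi + pi / 3) = - (cosh (real m * pi + pi / 3) / 2)"
      by (cases "even m") (simp_all add: cos_add cos_60)
    then show "?f (real m * pi + pi / 3) \<le> (-1) ^ Suc m"
      using cosh_gt_2[OF far(1)] sign by linarith
    have "?f (real m * pi + 2 * pi / 3) = cosh (real m * pi + 2 * pi / 3) / 2"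
      by (cases "even m") (simp_all add: cos_add cos_120)
    then show "(-1) ^ Suc m \<le> ?f (real m * pi + 2 * pi / 3)"
      using cosh_gt_2[OF far(2)] sign by linarith
  qed simp
  then show ?thesis by simp
qed

lemma cos_cosh_root:
  assumes "1 \<le> m"
  shows "cos_cosh_root m \<in> {real m * pi + pi / 3..real m * pi + 2 * pi / 3}"
    and "cos (cos_cosh_root m) * cosh (cos_cosh_root m) = 1"
  using theI'[OF cos_cosh_root_ex1[OF assms]] unfolding cos_cosh_root_def by auto

lemma cos_cosh_root_unique:
  "1 \<le> m \<Longrightarrow> x \<in> {real m * pi + pi / 3..real m * pi + 2 * pi / 3} \<Longrightarrow> cos x * cosh x = 1
    \<Longrightarrow> x = cos_cosh_root m"
  using cos_cosh_root_ex1 cos_cosh_root by blast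

lemma less_cos_cosh_root:
  assumes "1 \<le> m" "x \<in> {real m * pi + pi / 3..real m * pi + 2 * pi / 3}"
    and "(-1) ^ m < (-1) ^ m * (cos x * cosh x)"
  shows "x < cos_cosh_root m"
proof -
  have "(-1) ^ Suc m * (cos x * cosh x)
      < (-1) ^ Suc m * (cos (cos_cosh_root m) * cosh (cos_cosh_root m))"
    using assms(3) cos_cosh_root(2)[OF assms(1)] by simp
  then show ?thesis
    using strict_mono_on_less[OF cos_cosh_strict_mono_on] assms(2) cos_cosh_root(1)[OF assms(1)]
    by blast
qed

lemma cos_cosh_lt_1:
  fixes x :: real
  assumes "0 < x" "x \<le> pi"
  shows "cos x * cosh x < 1"
proof -
  define h :: "real \<Rightarrow> real" where "h y = cos y * sinh y - sin y * cosh y" for y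
  have h_neg: "h y < 0" if "0 < y" "y \<le> pi" for y
  proof -
    have "h y < h 0"
    proof (rule DERIV_neg_imp_decreasing_open[OF that(1)])
      fix z assume z: "0 < z" "z < y"
      then have "0 < sin z" "0 < sinh z" using that by (auto intro: sin_gt_zero)
      then show "\<exists>d. (h has_real_derivative d) (at z) \<and> d < 0" unfolding h_def
        by (intro exI[of _ "- 2 * sin z * sinh z"] conjI) (auto intro!: derivative_eq_intros)
    qed (auto simp: h_def intro!: continuous_intros)
    then show ?thesis by (simp add: h_def)
  qed
  have "cos x * cosh x < cos 0 * cosh 0"
  proof (rule DERIV_neg_imp_decreasing_open[OF assms(1)])
    fix z assume z: "0 < z" "z < x"
    show "\<exists>d. ((\<lambda>x. cos x * cosh x) has_real_derivative d) (at z) \<and> d < 0"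
      using h_neg[of z] z assms
      by (intro exI[of _ "h z"] conjI) (auto intro!: derivative_eq_intros simp: h_def)
  qed (auto intro!: continuous_intros)
  then show ?thesis by simp
qed

lemma cos_cosh_root_complete:
  assumes "0 < x" "cos x * cosh x = 1"
  shows "\<exists>m\<ge>1. x = cos_cosh_root m"
proof -
  have "pi < x" using cos_cosh_lt_1[of x] assms by force
  obtain m :: nat where m: "real m * pi \<le> x" "x < real (Suc m) * pi"
    using ex_pi_interval assms(1) by (metis less_imp_le)
  with \<open>pi < x\<close> have "1 \<le> m" by (cases m) auto
  define r where "r = x - real m * pi"
  have r: "0 \<le> r" "r \<le> pi" using m by (auto simp: r_def algebra_simps)
  have "cos x = 1 / cosh x" using assms(2) by (simp add: field_simps)
  then have "\<bar>cos x\<bar> = 1 / cosh x" by simp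
  also have "\<dots> < 1 / 2"
    using cosh_gt_2[of x] \<open>pi < x\<close> by (intro divide_strict_left_mono) auto
  finally have "\<bar>cos x\<bar> < 1 / 2" .
  moreover have "\<bar>cos r\<bar> = \<bar>cos x\<bar>" by (simp add: r_def sin_cos_shift_pi_multiple abs_mult)
  ultimately have "pi / 3 < r" "r < 2 * pi / 3"
    using abs_cos_lt_half_imp_middle_third[OF r] by auto
  then have "x = cos_cosh_root m"
    using \<open>1 \<le> m\<close> assms(2) by (intro cos_cosh_root_unique) (auto simp: r_def algebra_simps)
  with \<open>1 \<le> m\<close> show ?thesis by blast
qed

section \<open>Enumeration of the spectra\<close>

lemma jth_eig_strict_mono_enum:
  fixes f :: "nat \<Rightarrow> real"
  assumes P: "Collect P = range f" and f: "strict_mono f"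
  shows "jth_eig P (Suc i) = f i"
proof -
  have P_iff: "P \<mu> \<longleftrightarrow> (\<exists>n. \<mu> = f n)" for \<mu>
    using P by (auto simp: set_eq_iff)
  have below: "{\<nu>. P \<nu> \<and> \<nu> < f n} = f ` {..<n}" for n
    using P_iff strict_mono_less[OF f] by auto
  have card: "card {\<nu>. P \<nu> \<and> \<nu> < f n} = n" for n
    unfolding below using strict_mono_imp_inj_on[OF f] by (simp add: card_image inj_on_subset)
  show ?thesis unfolding jth_eig_def
  proof (rule the_equality)
    show "P (f i) \<and> finite {\<nu>. P \<nu> \<and> \<nu> < f i} \<and> card {\<nu>. P \<nu> \<and> \<nu> < f i} = Suc i - 1"
      using P_iff card below by auto
  next
    fix \<mu> assume \<mu>: "P \<mu> \<and> finite {\<nu>. P \<nu> \<and> \<nu> < \<mu>} \<and> card {\<nu>. P \<nu> \<and> \<nu> < \<mu>} = Suc i - 1"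
    then obtain n where "\<mu> = f n" using P_iff by auto
    with \<mu> card[of n] show "\<mu> = f i" by auto
  qed
qed

definition interleave :: "(nat \<Rightarrow> 'a) \<Rightarrow> (nat \<Rightarrow> 'a) \<Rightarrow> nat \<Rightarrow> 'a" where
  "interleave a b n = (if even n then a (n div 2) else b (n div 2))"

lemma range_interleave: "range (interleave a b) = range a \<union> range b"
proof
  show "range (interleave a b) \<subseteq> range a \<union> range b"
    by (auto simp: interleave_def)
  have "a i = interleave a b (2 * i)" "b i = interleave a b (2 * i + 1)" for i
    by (simp_all add: interleave_def)
  then show "range a \<union> range b \<subseteq> range (interleave a b)"
    by auto
qed

lemma strict_mono_interleave:
  fixes a b :: "nat \<Rightarrow> 'a::order"
  assumes "\<And>i. a i < b i" "\<And>i. b i < a (Suc i)"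
  shows "strict_mono (interleave a b)"
  unfolding strict_mono_Suc_iff
proof
  fix n
  show "interleave a b n < interleave a b (Suc n)"
    using assms by (cases "even n") (auto simp: interleave_def elim: oddE)
qed

lemma jth_eig_dirichlet_laplacian:
  "jth_eig dirichlet_laplacian_eig (Suc n) = (real (Suc n) * pi)\<^sup>2"
proof (rule jth_eig_strict_mono_enum)
  show "Collect dirichlet_laplacian_eig = range (\<lambda>m. (real (Suc m) * pi)\<^sup>2)"
    by (auto simp: dirichlet_laplacian_eig_iff)
  show "strict_mono (\<lambda>m. (real (Suc m) * pi)\<^sup>2)"
    by (rule strict_monoI, rule power_strict_mono) auto
qed

definition buckling_half_root :: "nat \<Rightarrow> real" where
  "buckling_half_root = interleave (\<lambda>i. real (Suc i) * pi) (\<lambda>i. tan_root (Suc i))"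

lemma strict_mono_buckling_half_root: "strict_mono buckling_half_root"
  unfolding buckling_half_root_def
proof (rule strict_mono_interleave)
  show "real (Suc i) * pi < tan_root (Suc i)" for i
    using tan_root_bounds(1)[of "Suc i"] by simp
  show "tan_root (Suc i) < real (Suc (Suc i)) * pi" for i
  proof -
    have "tan_root (Suc i) < real (Suc i) * pi + pi / 2" by (rule tan_root_bounds(2)) simp
    moreover have "real (Suc (Suc i)) * pi = real (Suc i) * pi + pi" by (simp add: algebra_simps)
    ultimately show ?thesis using pi_gt_zero by linarith
  qed
qed

lemma range_buckling_half_root:
  "range buckling_half_root = {t. 0 < t \<and> sin t * (sin t - t * cos t) = 0}"
  unfolding buckling_half_root_def range_interleave
proof (intro equalityI subsetI)
  fix t assume "t \<in> range (\<lambda>i. real (Suc i) * pi) \<union> range (\<lambda>i. tan_root (Suc i))"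
  then show "t \<in> {t. 0 < t \<and> sin t * (sin t - t * cos t) = 0}"
  proof
    assume "t \<in> range (\<lambda>i. real (Suc i) * pi)"
    then show ?thesis by (auto simp del: of_nat_Suc)
  next
    assume "t \<in> range (\<lambda>i. tan_root (Suc i))"
    then obtain i where i: "t = tan_root (Suc i)" by blast
    have "0 < real (Suc i) * pi" by simp
    with i have "0 < t" using tan_root_bounds(1)[of "Suc i"] by linarith
    with i show ?thesis using tan_root(2)[of "Suc i"] by simp
  qed
next
  fix t :: real assume "t \<in> {t. 0 < t \<and> sin t * (sin t - t * cos t) = 0}"
  then have t: "0 < t" "sin t = 0 \<or> sin t = t * cos t" by auto
  show "t \<in> range (\<lambda>i. real (Suc i) * pi) \<union> range (\<lambda>i. tan_root (Suc i))"
  proof (cases "sin t = 0")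
    case True
    then obtain i :: int where i: "t = of_int i * pi" by (auto simp: sin_zero_iff_int2)
    with t have "0 < i" by (simp add: zero_less_mult_iff)
    with i have "t = real (Suc (nat i - 1)) * pi" by (simp add: of_nat_diff)
    then show ?thesis by blast
  next
    case False
    with t obtain m where "1 \<le> m" "t = tan_root m" using tan_root_complete by blast
    then have "t = tan_root (Suc (m - 1))" by simp
    then show ?thesis by blast
  qed
qed

lemma buckling_half_root_pos: "0 < buckling_half_root n"
  using rangeI[of buckling_half_root n] unfolding range_buckling_half_root by blast

lemma jth_eig_buckling: "jth_eig buckling_eig (Suc n) = (2 * buckling_half_root n)\<^sup>2"
proof (rule jth_eig_strict_mono_enum)
  have "Collect buckling_eig = (\<lambda>t. (2 * t)\<^sup>2) ` {t. 0 < t \<and> sin t * (sin t - t * cos t) = 0}"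
    by (auto simp: buckling_eig_iff)
  then show "Collect buckling_eig = range (\<lambda>n. (2 * buckling_half_root n)\<^sup>2)"
    unfolding range_buckling_half_root[symmetric] by (simp add: image_image)
  show "strict_mono (\<lambda>n. (2 * buckling_half_root n)\<^sup>2)"
    using strict_mono_buckling_half_root buckling_half_root_pos
    by (intro strict_monoI power_strict_mono) (auto simp: strict_mono_less less_imp_le)
qed

lemma buckling_half_root_le: "2 * buckling_half_root n \<le> real (n + 2) * pi"
proof (cases "even n")
  case True
  then obtain i where "n = 2 * i" by blast
  then show ?thesis by (simp add: buckling_half_root_def interleave_def algebra_simps)
next
  case False
  then obtain i where i: "n = 2 * i + 1" using oddE by blast
  have "tan_root (Suc i) < real (Suc i) * pi + pi / 2" using tan_root_bounds(2)[of "Suc i"] by simp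
  with i show ?thesis by (simp add: buckling_half_root_def interleave_def algebra_simps)
qed

lemma cos_cosh_root_pos: "1 \<le> m \<Longrightarrow> 0 < cos_cosh_root m"
  using cos_cosh_root(1)[of m] pi_gt_zero
  by (auto intro: less_le_trans[OF add_nonneg_pos[of "real m * pi" "pi / 3"]])

lemma jth_eig_dirichlet_bilaplacian:
  "jth_eig dirichlet_bilaplacian_eig (Suc n) = cos_cosh_root (Suc n) ^ 4"
proof (rule jth_eig_strict_mono_enum)
  show "Collect dirichlet_bilaplacian_eig = range (\<lambda>n. cos_cosh_root (Suc n) ^ 4)"
  proof (intro equalityI subsetI)
    fix \<Lambda> assume "\<Lambda> \<in> Collect dirichlet_bilaplacian_eig"
    then obtain k where k: "0 < k" "\<Lambda> = k ^ 4" "cos k * cosh k = 1"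
      by (auto simp: dirichlet_bilaplacian_eig_iff)
    then obtain m where "1 \<le> m" "k = cos_cosh_root m" using cos_cosh_root_complete by blast
    with k show "\<Lambda> \<in> range (\<lambda>n. cos_cosh_root (Suc n) ^ 4)"
      by (intro image_eqI[of _ _ "m - 1"]) auto
  next
    fix \<Lambda> assume "\<Lambda> \<in> range (\<lambda>n. cos_cosh_root (Suc n) ^ 4)"
    then obtain n where "\<Lambda> = cos_cosh_root (Suc n) ^ 4" by blast
    then show "\<Lambda> \<in> Collect dirichlet_bilaplacian_eig"
      using cos_cosh_root_pos[of "Suc n"] cos_cosh_root(2)[of "Suc n"]
      by (auto simp: dirichlet_bilaplacian_eig_iff)
  qed
  have "cos_cosh_root (Suc n) < cos_cosh_root (Suc (Suc n))" for n
  proof -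
    have "cos_cosh_root (Suc n) \<le> real (Suc n) * pi + 2 * pi / 3"
      using cos_cosh_root(1)[of "Suc n"] by simp
    also have "\<dots> < real (Suc (Suc n)) * pi + pi / 3"
      using pi_gt_zero by (simp add: algebra_simps)
    also have "\<dots> \<le> cos_cosh_root (Suc (Suc n))"
      using cos_cosh_root(1)[of "Suc (Suc n)"] by simp
    finally show ?thesis .
  qed
  then have mono: "strict_mono (\<lambda>n. cos_cosh_root (Suc n))"
    by (simp add: strict_mono_Suc_iff)
  show "strict_mono (\<lambda>n. cos_cosh_root (Suc n) ^ 4)"
  proof (rule strict_monoI)
    fix m n :: nat assume "m < n"
    with mono have "cos_cosh_root (Suc m) < cos_cosh_root (Suc n)" by (simp add: strict_mono_def)
    then show "cos_cosh_root (Suc m) ^ 4 < cos_cosh_root (Suc n) ^ 4"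
      using cos_cosh_root_pos[of "Suc m"] by (intro power_strict_mono) auto
  qed
qed

section \<open>The inequality\<close>

lemma sqrt_pronic_bounds:
  fixes j :: nat
  assumes "1 \<le> j"
  defines "s \<equiv> sqrt (real j * (real j + 1))"
  shows "real j + 1 / 3 \<le> s" and "s < real j + 1 / 2"
    and "1 / (4 * (2 * real j + 1)) < real j + 1 / 2 - s"
proof -
  have j: "1 \<le> real j" using assms by simp
  show lower: "real j + 1 / 3 \<le> s"
    unfolding s_def by (rule real_le_rsqrt) (use j in \<open>simp add: power2_eq_square algebra_simps\<close>)
  show upper: "s < real j + 1 / 2"
    unfolding s_def by (rule real_less_lsqrt) (simp_all add: power2_eq_square algebra_simps)
  have prod: "(real j + 1 / 2 - s) * (real j + 1 / 2 + s) = 1 / 4"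
    using j by (simp add: s_def power2_eq_square algebra_simps)
  have sum: "0 < real j + 1 / 2 + s" "real j + 1 / 2 + s < 2 * real j + 1"
    using lower upper j by linarith+
  have "1 / (4 * (2 * real j + 1)) < 1 / (4 * (real j + 1 / 2 + s))"
    using sum by (intro divide_strict_left_mono) auto
  also have "\<dots> = real j + 1 / 2 - s"
    using prod sum(1) by (simp add: field_simps)
  finally show "1 / (4 * (2 * real j + 1)) < real j + 1 / 2 - s" .
qed

lemma cosh_pi_sqrt_pronic_gt:
  assumes "1 \<le> j"
  shows "1 + 9 * (real j * (real j + 1)) / 2 < cosh (pi * sqrt (real j * (real j + 1)))"
proof -
  have "(3::real)\<^sup>2 < pi\<^sup>2" using pi_gt3 by (intro power_strict_mono) auto
  then have "9 * (real j * (real j + 1)) < pi\<^sup>2 * (real j * (real j + 1))"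
    using assms by (intro mult_strict_right_mono) auto
  moreover have "(pi * sqrt (real j * (real j + 1)))\<^sup>2 = pi\<^sup>2 * (real j * (real j + 1))"
    by (simp add: power_mult_distrib)
  ultimately show ?thesis
    using cosh_ge_1_plus_half_sq[of "pi * sqrt (real j * (real j + 1))"] by linarith
qed

lemma cos_cosh_at_pi_sqrt_pronic:
  fixes j :: nat
  assumes j: "1 \<le> j"
  defines "a \<equiv> pi * sqrt (real j * (real j + 1))"
  shows "a \<in> {real j * pi + pi / 3..real j * pi + 2 * pi / 3}"
    and "(-1) ^ j < (-1) ^ j * (cos a * cosh a)"
proof -
  define e where "e = real j + 1 / 2 - sqrt (real j * (real j + 1))"
  note bounds = sqrt_pronic_bounds[OF j, folded e_def]
  have e: "1 / (4 * (2 * real j + 1)) < e" "0 < e" "e \<le> 1 / 6"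
    using bounds by (auto simp: e_def intro: less_trans[rotated])
  have a_eq: "a = real j * pi + (pi / 2 - pi * e)"
    by (simp add: a_def e_def algebra_simps)
  have pe: "0 < pi * e" "pi * e \<le> pi / 6"
    using e(2,3) by (simp_all add: mult_left_mono)
  then show "a \<in> {real j * pi + pi / 3..real j * pi + 2 * pi / 3}"
    unfolding a_eq atLeastAtMost_iff by (intro conjI) linarith+
  have cos_a: "(-1) ^ j * cos a = sin (pi * e)"
    using sin_cos_shift_pi_multiple(2)[of a j] by (simp add: a_eq sin_cos_eq)
  have "pi * e / 2 \<le> sin (pi * e)"
    using pe pi_gt_zero by (intro sin_ge_half_self) linarith+
  moreover have "3 * e < pi * e" using e(2) pi_gt3 by simp
  then have "3 / 2 * (1 / (4 * (2 * real j + 1))) < pi * e / 2" using e(1) by linarith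
  ultimately have sin_lower: "3 / (8 * (2 * real j + 1)) < sin (pi * e)" by simp
  have cosh_lower: "1 + 9 * (real j * (real j + 1)) / 2 < cosh a"
    unfolding a_def by (rule cosh_pi_sqrt_pronic_gt[OF j])
  have j': "1 \<le> real j" using j by simp
  then have "real j \<le> real j * real j" using mult_right_mono[of 1 "real j" "real j"] by simp
  with j' have "10 + 5 * real j < 27 * (real j * real j)" by linarith
  then have "8 * (2 * real j + 1) < 3 * (1 + 9 * (real j * (real j + 1)) / 2)"
    by (simp add: algebra_simps)
  then have "1 < 3 / (8 * (2 * real j + 1)) * (1 + 9 * (real j * (real j + 1)) / 2)"
    by (simp add: field_simps)
  also have "\<dots> < sin (pi * e) * cosh a"
    using sin_lower cosh_lower by (intro mult_strict_mono') auto
  also have "\<dots> = (-1) ^ j * (cos a * cosh a)" by (simp flip: cos_a)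
  finally show "(-1) ^ j < (-1) ^ j * (cos a * cosh a)"
    by (cases "even j") auto
qed

lemma cos_cosh_root_sq_gt:
  assumes "1 \<le> j"
  shows "pi\<^sup>2 * (real j * (real j + 1)) < cos_cosh_root j ^ 2"
proof -
  define a where "a = pi * sqrt (real j * (real j + 1))"
  have "a < cos_cosh_root j"
    using less_cos_cosh_root[OF assms cos_cosh_at_pi_sqrt_pronic[OF assms, folded a_def]] .
  moreover have "0 \<le> a" by (simp add: a_def)
  ultimately have "a\<^sup>2 < (cos_cosh_root j)\<^sup>2" by (simp add: power_strict_mono)
  moreover have "a\<^sup>2 = pi\<^sup>2 * (real j * (real j + 1))" by (simp add: a_def power_mult_distrib)
  ultimately show ?thesis by simp
qed

theorem proposition4p1:
  fixes j :: nat
  assumes "j \<ge> 1"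
  shows "jth_eig dirichlet_bilaplacian_eig j
           > jth_eig dirichlet_laplacian_eig j * jth_eig buckling_eig j"
proof -
  obtain n where j: "j = Suc n" using assms by (cases j) auto
  have "jth_eig dirichlet_laplacian_eig j * jth_eig buckling_eig j
      = (real j * pi)\<^sup>2 * (2 * buckling_half_root n)\<^sup>2"
    by (simp add: j jth_eig_dirichlet_laplacian jth_eig_buckling)
  also have "\<dots> \<le> (real j * pi)\<^sup>2 * ((real j + 1) * pi)\<^sup>2"
    using buckling_half_root_le[of n] buckling_half_root_pos[of n]
    by (intro mult_left_mono power_mono) (auto simp: j algebra_simps)
  also have "\<dots> = (pi\<^sup>2 * (real j * (real j + 1)))\<^sup>2"
    by (simp only: power2_eq_square) algebra
  also have "\<dots> < (cos_cosh_root j ^ 2)\<^sup>2"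
    using cos_cosh_root_sq_gt[OF assms] by (intro power_strict_mono) auto
  also have "\<dots> = jth_eig dirichlet_bilaplacian_eig j"
    by (simp add: j jth_eig_dirichlet_bilaplacian)
  finally show ?thesis .
qed

end
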